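(* Let $g,\ell$ be kernels on $X$ (with $g_z\ne0$, $\ell_z\ne0$ for all $z$) such that $\ell/g$ is positive semi-definite. Then for every $n\ge2$ and every $n$-point subset $\{\mu_1,\dots,\mu_n\}$ of $X$, $$\mathrm{dist}\big(\hat g_{\mu_1},\mathrm{span}\{\hat g_{\mu_2},\dots,\hat g_{\mu_n}\}\big)\le\mathrm{dist}\big(\hat\ell_{\mu_1},\mathrm{span}\{\hat\ell_{\mu_2},\dots,\hat\ell_{\mu_n}\}\big),$$ the distances being taken in $\mathcal{H}_g$ and $\mathcal{H}_\ell$ respectively.
   Context: A kernel on $X$ is a positive semi-definite function $k:X\times X\to\mathbb{C}$; $\mathcal{H}_k$ its reproducing kernel Hilbert space, $k_w=k(\cdot,w)$, $\hat k_w=k_w/\|k_w\|$. "$\ell/g$ positive semi-definite" means $\ell=gh$ for some positive semi-definite kernel $h$ on $X$. *)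

theory Defs
  imports "HOL-Analysis.Analysis"
begin

definition psd_kernel :: "('a \<Rightarrow> 'a \<Rightarrow> complex) \<Rightarrow> bool" where
  "psd_kernel k \<longleftrightarrow>
     (\<forall>(m::nat) (x::nat \<Rightarrow> 'a) (c::nat \<Rightarrow> complex).
        (\<Sum>i<m. \<Sum>j<m. cnj (c i) * c j * k (x i) (x j)) \<in> \<real> \<and>
        0 \<le> Re (\<Sum>i<m. \<Sum>j<m. cnj (c i) * c j * k (x i) (x j)))"

text \<open>Squared RKHS norm of the finite combination sum_{x in F} a x * k_x, where
  k_x = k(-,x), using <k_y, k_x> = k(x,y).\<close>
definition comb_norm2 :: "('a \<Rightarrow> 'a \<Rightarrow> complex) \<Rightarrow> ('a \<Rightarrow> complex) \<Rightarrow> 'a set \<Rightarrow> real" where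
  "comb_norm2 k a F = Re (\<Sum>x\<in>F. \<Sum>y\<in>F. cnj (a x) * a y * k x y)"

definition kernel_fn_norm :: "('a \<Rightarrow> 'a \<Rightarrow> complex) \<Rightarrow> 'a \<Rightarrow> real" where
  "kernel_fn_norm k w = sqrt (Re (k w w))"

text \<open>Gram kernel of the normalized kernel functions: <hat k_y, hat k_x> = k(x,y)/(||k_x|| ||k_y||).\<close>
definition normalized_kernel :: "('a \<Rightarrow> 'a \<Rightarrow> complex) \<Rightarrow> 'a \<Rightarrow> 'a \<Rightarrow> complex" where
  "normalized_kernel k x y = k x y / (of_real (kernel_fn_norm k x) * of_real (kernel_fn_norm k y))"

text \<open>The span is finite dimensional, hence closed, so this is the Hilbert-space distance.\<close>
definition dist_to_span :: "('a \<Rightarrow> 'a \<Rightarrow> complex) \<Rightarrow> 'a \<Rightarrow> 'a set \<Rightarrow> real" where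
  "dist_to_span k w S =
     (INF c \<in> (UNIV :: ('a \<Rightarrow> complex) set).
        sqrt (comb_norm2 (normalized_kernel k) (\<lambda>x. if x = w then 1 else - c x) (insert w S)))"

end

theory Submission
  imports Defs
begin

text \<open>Let \<open>G\<close>, \<open>L\<close>, \<open>H\<close> be the Gram kernels of the normalised kernel functions of \<open>g\<close>, \<open>l = g h\<close>
  and \<open>h\<close>, restricted to \<open>F = {\<mu>\<^sub>1, \<dots>, \<mu>\<^sub>n}\<close>. Then \<open>L = G \<circ> H\<close> (entrywise product) and
  \<open>H(\<mu>\<^sub>1, \<mu>\<^sub>1) = 1\<close>. The squared distance \<open>d\<^sup>2\<close> from \<open>\<hat>g\<^sub>\<mu>\<^sub>1\<close> to the span of the others is the
  minimum of the quadratic form of \<open>G\<close> over coefficient vectors with \<open>\<mu>\<^sub>1\<close>-entry \<open>1\<close>, so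
  \<open>G - d\<^sup>2 e e\<^sup>*\<close> is positive semidefinite, \<open>e\<close> being the unit vector at \<open>\<mu>\<^sub>1\<close>. By Schur's product
  theorem so is \<open>(G - d\<^sup>2 e e\<^sup>*) \<circ> H = L - d\<^sup>2 e e\<^sup>*\<close>, which says that \<open>d\<close> also bounds the
  distance in \<open>\<H>\<^sub>l\<close> from below.\<close>

definition quad_form :: "('a \<Rightarrow> 'a \<Rightarrow> complex) \<Rightarrow> 'a set \<Rightarrow> ('a \<Rightarrow> complex) \<Rightarrow> complex" where
  "quad_form A F c = (\<Sum>x\<in>F. \<Sum>y\<in>F. cnj (c x) * c y * A x y)"

definition psd_on :: "('a \<Rightarrow> 'a \<Rightarrow> complex) \<Rightarrow> 'a set \<Rightarrow> bool" where
  "psd_on A F \<longleftrightarrow> (\<forall>c. quad_form A F c \<in> \<real> \<and> 0 \<le> Re (quad_form A F c))"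

lemma psd_onD:
  assumes "psd_on A F"
  shows "quad_form A F c \<in> \<real>" "0 \<le> Re (quad_form A F c)"
  using assms unfolding psd_on_def by blast+

lemma psd_on_transfer:
  assumes "psd_on A F" "\<And>c. quad_form B G c = quad_form A F (T c)"
  shows "psd_on B G"
  unfolding psd_on_def
proof
  fix c
  from assms(2) show "quad_form B G c \<in> \<real> \<and> 0 \<le> Re (quad_form B G c)" using psd_onD[OF assms(1)] by simp
qed

definition gram_factor :: "('a \<Rightarrow> 'a \<Rightarrow> complex) \<Rightarrow> 'a set \<Rightarrow> ('a \<Rightarrow> 'a \<Rightarrow> complex) \<Rightarrow> bool" where
  "gram_factor A F v \<longleftrightarrow> (\<forall>x\<in>F. \<forall>y\<in>F. A x y = (\<Sum>k\<in>F. v k x * cnj (v k y)))"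

lemma quad_form_mono_neutral:
  assumes "finite F" "G \<subseteq> F" "\<forall>z\<in>F - G. c z = 0"
  shows "quad_form A F c = quad_form A G c"
proof -
  have fin: "finite G" using assms finite_subset by blast
  have "quad_form A F c = (\<Sum>x\<in>F. \<Sum>y\<in>G. cnj (c x) * c y * A x y)"
    unfolding quad_form_def
    by (rule sum.cong[OF refl], rule sum.mono_neutral_right) (use assms fin in auto)
  also have "\<dots> = (\<Sum>x\<in>G. \<Sum>y\<in>G. cnj (c x) * c y * A x y)"
    by (rule sum.mono_neutral_right) (use assms fin in auto)
  finally show ?thesis unfolding quad_form_def .
qed

lemma quad_form_one_point:
  assumes "finite F" "x \<in> F"
  shows "quad_form A F (\<lambda>z. if z = x then \<alpha> else 0) = cnj \<alpha> * \<alpha> * A x x"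
proof -
  have "quad_form A F (\<lambda>z. if z = x then \<alpha> else 0) = quad_form A {x} (\<lambda>z. if z = x then \<alpha> else 0)"
    by (rule quad_form_mono_neutral) (use assms in auto)
  also have "\<dots> = cnj \<alpha> * \<alpha> * A x x" unfolding quad_form_def by simp
  finally show ?thesis .
qed

lemma quad_form_two_point:
  assumes "finite F" "x \<in> F" "y \<in> F" "x \<noteq> y"
  shows "quad_form A F (\<lambda>z. if z = x then \<alpha> else if z = y then \<beta> else 0) =
    cnj \<alpha> * \<alpha> * A x x + cnj \<alpha> * \<beta> * A x y + cnj \<beta> * \<alpha> * A y x + cnj \<beta> * \<beta> * A y y"
proof -
  have "quad_form A F (\<lambda>z. if z = x then \<alpha> else if z = y then \<beta> else 0) =
        quad_form A {x,y} (\<lambda>z. if z = x then \<alpha> else if z = y then \<beta> else 0)"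
    by (rule quad_form_mono_neutral) (use assms in auto)
  also have "\<dots> = cnj \<alpha> * \<alpha> * A x x + cnj \<alpha> * \<beta> * A x y + cnj \<beta> * \<alpha> * A y x + cnj \<beta> * \<beta> * A y y"
    unfolding quad_form_def using assms(4) by (simp add: algebra_simps)
  finally show ?thesis .
qed

lemma quad_form_scale: "quad_form A F (\<lambda>x. t * c x) = cnj t * t * quad_form A F c"
  unfolding quad_form_def by (simp add: sum_distrib_left mult_ac)

lemma quad_form_minus_point_mass:
  assumes "finite F" "w \<in> F"
  shows "quad_form (\<lambda>x y. A x y - r * (if x = w \<and> y = w then 1 else 0)) F c
           = quad_form A F c - r * (cnj (c w) * c w)"
proof -
  have "(\<Sum>x\<in>F. \<Sum>y\<in>F. cnj (c x) * c y * (r * (if x = w \<and> y = w then 1 else 0)))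
      = (\<Sum>x\<in>F. if x = w then cnj (c w) * c w * r else 0)"
    using assms by (intro sum.cong refl) (auto simp: if_distrib cong: if_cong)
  also have "\<dots> = r * (cnj (c w) * c w)" using assms by (simp add: mult_ac)
  finally show ?thesis
    unfolding quad_form_def by (simp add: right_diff_distrib sum_subtractf)
qed

lemma psd_on_subset:
  assumes "psd_on A F" "finite F" "G \<subseteq> F"
  shows "psd_on A G"
proof (rule psd_on_transfer[OF assms(1)])
  fix c
  have "quad_form A G c = quad_form A G (\<lambda>z. if z \<in> G then c z else 0)"
    unfolding quad_form_def by (intro sum.cong refl) auto
  also have "\<dots> = quad_form A F (\<lambda>z. if z \<in> G then c z else 0)"
    by (rule quad_form_mono_neutral[symmetric]) (use assms in auto)
  finally show "quad_form A G c = quad_form A F (\<lambda>z. if z \<in> G then c z else 0)" .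
qed

lemma psd_on_diag:
  assumes "psd_on A F" "finite F" "x \<in> F"
  shows "A x x \<in> \<real>" "0 \<le> Re (A x x)"
  using psd_onD[OF assms(1), of "\<lambda>z. if z = x then 1 else 0"] quad_form_one_point[OF assms(2,3), of A 1]
  by simp_all

lemma psd_on_hermitian:
  assumes "psd_on A F" "finite F" "x \<in> F" "y \<in> F"
  shows "A y x = cnj (A x y)"
proof (cases "x = y")
  case True
  then show ?thesis using psd_on_diag[OF assms(1-3)] by (simp add: Reals_cnj_iff)
next
  case False
  have diag: "Im (A x x) = 0" "Im (A y y) = 0"
    using psd_on_diag[OF assms(1,2)] assms(3,4) by (auto simp: complex_is_Real_iff)
  have "quad_form A F (\<lambda>z. if z = x then 1 else if z = y then 1 else 0) \<in> \<real>"
    by (rule psd_onD[OF assms(1)])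
  then have im: "Im (A x y) + Im (A y x) = 0"
    using quad_form_two_point[OF assms(2-4) False, of A 1 1] diag by (simp add: complex_is_Real_iff)
  have "quad_form A F (\<lambda>z. if z = x then 1 else if z = y then \<i> else 0) \<in> \<real>"
    by (rule psd_onD[OF assms(1)])
  then have re: "Re (A x y) - Re (A y x) = 0"
    using quad_form_two_point[OF assms(2-4) False, of A 1 \<i>] diag by (simp add: complex_is_Real_iff)
  show ?thesis using im re by (simp add: complex_eq_iff)
qed

text \<open>Otherwise the form would be negative at the vector with entry \<open>-r A a x\<close> at \<open>a\<close> and
  \<open>1\<close> at \<open>x\<close>, for \<open>r\<close> large.\<close>

lemma psd_on_row_zero:
  assumes "psd_on A F" "finite F" "a \<in> F" "A a a = 0" "x \<in> F"
  shows "A a x = 0"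
proof (rule ccontr)
  define s where "s = A a x"
  assume "A a x \<noteq> 0"
  then have s: "s \<noteq> 0" "x \<noteq> a" using assms(4) s_def by auto
  have herm: "A x a = cnj s" using psd_on_hermitian[OF assms(1,2,3,5)] s_def by simp
  define q where "q = Re (cnj s * s)"
  have ns: "q > 0" unfolding q_def using s
    by (simp add: power2_eq_square[symmetric] complex_eq_iff sum_power2_gt_zero_iff)
  define r where "r = (Re (A x x) + 1) / (2 * q)"
  have rs: "2 * r * q = Re (A x x) + 1" unfolding r_def using ns by simp
  define \<alpha> where "\<alpha> = - of_real r * s"
  have "0 \<le> Re (quad_form A F (\<lambda>z. if z = a then \<alpha> else if z = x then 1 else 0))"
    by (rule psd_onD[OF assms(1)])
  also have "quad_form A F (\<lambda>z. if z = a then \<alpha> else if z = x then 1 else 0)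
     = cnj \<alpha> * s + \<alpha> * cnj s + A x x"
    using quad_form_two_point[OF assms(2,3,5) s(2)[symmetric], of A \<alpha> 1] assms(4) herm s_def
    by simp
  also have "Re (cnj \<alpha> * s + \<alpha> * cnj s + A x x) = Re (A x x) - 2 * r * q"
    unfolding \<alpha>_def q_def by (simp add: algebra_simps)
  finally show False using rs by linarith
qed

lemma quad_form_schur_complement:
  assumes fin: "finite F" and aF: "a \<notin> F" and real: "cnj (A a a) = A a a" and nz: "A a a \<noteq> 0"
  shows "quad_form (\<lambda>x y. A x y - A x a * A a y / A a a) F c =
         quad_form A (insert a F) (c(a := - (\<Sum>y\<in>F. c y * A a y) / A a a))"
proof -
  define s where "s = (\<Sum>y\<in>F. c y * A a y)"
  define p where "p = (\<Sum>x\<in>F. cnj (c x) * A x a)"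
  define t where "t = - s / A a a"
  define c' where "c' = c(a := t)"
  have c': "\<And>x. x \<in> F \<Longrightarrow> c' x = c x" "c' a = t" unfolding c'_def using aF by auto
  have "quad_form A (insert a F) c' =
     cnj t * t * A a a + (\<Sum>y\<in>F. cnj t * c y * A a y) + (\<Sum>x\<in>F. cnj (c x) * t * A x a)
     + quad_form A F c"
    unfolding quad_form_def using fin aF c' by (simp add: sum.distrib algebra_simps)
  also have "(\<Sum>y\<in>F. cnj t * c y * A a y) = cnj t * s"
    unfolding s_def by (simp add: sum_distrib_left mult.assoc)
  also have "(\<Sum>x\<in>F. cnj (c x) * t * A x a) = t * p"
    unfolding p_def by (simp add: sum_distrib_left algebra_simps)
  also have "cnj t * t * A a a + cnj t * s + t * p + quad_form A F c
               = quad_form A F c - p * s / A a a"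
  proof -
    have "cnj t = - cnj s / A a a" unfolding t_def using real by (simp add: complex_cnj_divide)
    then show ?thesis unfolding t_def using nz by (simp add: field_simps)
  qed
  also have "quad_form A F c - p * s / A a a = quad_form (\<lambda>x y. A x y - A x a * A a y / A a a) F c"
  proof -
    have "p * s / A a a = (\<Sum>x\<in>F. \<Sum>y\<in>F. cnj (c x) * c y * (A x a * A a y / A a a))"
      unfolding p_def s_def sum_product sum_divide_distrib
      by (intro sum.cong refl) (simp add: algebra_simps)
    then show ?thesis unfolding quad_form_def by (simp add: sum_subtractf algebra_simps)
  qed
  finally show ?thesis unfolding c'_def t_def s_def by (rule sym)
qed

lemma psd_on_schur_complement:
  assumes "finite F" "a \<notin> F" "psd_on A (insert a F)" "A a a \<noteq> 0"
  shows "psd_on (\<lambda>x y. A x y - A x a * A a y / A a a) F"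
proof (rule psd_on_transfer[OF assms(3)])
  have "cnj (A a a) = A a a"
    using psd_on_diag(1)[OF assms(3) finite.insertI[OF assms(1)] insertI1]
    by (simp add: Reals_cnj_iff)
  then show "quad_form (\<lambda>x y. A x y - A x a * A a y / A a a) F c =
        quad_form A (insert a F) (c(a := - (\<Sum>y\<in>F. c y * A a y) / A a a))" for c
    by (rule quad_form_schur_complement[of F a A, OF assms(1,2) _ assms(4)])
qed

subsection \<open>Gram factorisation and Schur's product theorem\<close>

lemma gram_factor_insert_null:
  assumes "finite F" "a \<notin> F" "gram_factor A F v"
    and "\<And>x. x \<in> insert a F \<Longrightarrow> A a x = 0" "\<And>x. x \<in> insert a F \<Longrightarrow> A x a = 0"
  shows "gram_factor A (insert a F) (\<lambda>k x. if k = a \<or> x = a then 0 else v k x)"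
  unfolding gram_factor_def
proof (intro ballI)
  fix x y assume x: "x \<in> insert a F" and y: "y \<in> insert a F"
  let ?v = "\<lambda>k x. if k = a \<or> x = a then 0 else v k x"
  have sum: "(\<Sum>k\<in>insert a F. ?v k x * cnj (?v k y)) = (\<Sum>k\<in>F. ?v k x * cnj (?v k y))"
    using assms(1,2) by simp
  show "A x y = (\<Sum>k\<in>insert a F. ?v k x * cnj (?v k y))"
  proof (cases "x = a \<or> y = a")
    case True
    then have "(\<Sum>k\<in>F. ?v k x * cnj (?v k y)) = 0" by (auto intro!: sum.neutral)
    moreover have "A x y = 0" using True assms(4,5) x y by blast
    ultimately show ?thesis unfolding sum by simp
  next
    case False
    then have "A x y = (\<Sum>k\<in>F. v k x * cnj (v k y))"
      using assms(3) x y unfolding gram_factor_def by blast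
    also have "\<dots> = (\<Sum>k\<in>F. ?v k x * cnj (?v k y))" using False assms(2) by (intro sum.cong) auto
    finally show ?thesis unfolding sum .
  qed
qed

text \<open>With \<open>A a a = p > 0\<close>, the column \<open>A \<cdot> a / \<surd>p\<close> absorbs the rank one part
  \<open>A x a A a y / A a a\<close>; the rest is the Schur complement, factorised by \<open>w\<close>.\<close>

lemma gram_factor_insert_pivot:
  assumes "finite F" "a \<notin> F" "A a a = of_real p" "p > 0"
    and herm: "\<And>y. y \<in> insert a F \<Longrightarrow> A a y = cnj (A y a)"
    and w: "gram_factor (\<lambda>x y. A x y - A x a * A a y / A a a) F w"
  shows "gram_factor A (insert a F)
           (\<lambda>k x. if k = a then A x a / of_real (sqrt p) else if x = a then 0 else w k x)"
  unfolding gram_factor_def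
proof (intro ballI)
  fix x y assume x: "x \<in> insert a F" and y: "y \<in> insert a F"
  define sp where "sp = complex_of_real (sqrt p)"
  let ?v = "\<lambda>k x. if k = a then A x a / sp else if x = a then 0 else w k x"
  have sp: "sp * sp = A a a" "cnj sp = sp"
    unfolding sp_def assms(3) of_real_mult[symmetric] using assms(4) by simp_all
  have pivot: "A x a / sp * cnj (A y a / sp) = A x a * A a y / A a a"
    using herm[OF y] sp by (simp add: complex_cnj_divide)
  have sum: "(\<Sum>k\<in>insert a F. ?v k x * cnj (?v k y))
               = A x a * A a y / A a a + (\<Sum>k\<in>F. ?v k x * cnj (?v k y))"
    using assms(1,2) pivot by simp
  show "A x y = (\<Sum>k\<in>insert a F. ?v k x * cnj (?v k y))"
  proof (cases "x = a \<or> y = a")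
    case True
    then have "(\<Sum>k\<in>F. ?v k x * cnj (?v k y)) = 0"
      using assms(2) by (auto intro!: sum.neutral)
    then show ?thesis unfolding sum using True assms(3,4) by auto
  next
    case False
    then have "A x y - A x a * A a y / A a a = (\<Sum>k\<in>F. w k x * cnj (w k y))"
      using w x y unfolding gram_factor_def by blast
    also have "\<dots> = (\<Sum>k\<in>F. ?v k x * cnj (?v k y))" using False assms(2) by (intro sum.cong) auto
    finally show ?thesis unfolding sum by (simp add: diff_eq_eq add.commute)
  qed
qed

lemma psd_on_imp_gram_factor:
  assumes "finite F" "psd_on A F"
  shows "\<exists>v. gram_factor A F v"
  using assms
proof (induction F arbitrary: A rule: finite_induct)
  case empty
  then show ?case by (simp add: gram_factor_def)
next
  case (insert a F)
  have fin: "finite (insert a F)" using insert.hyps by simp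
  have real: "A a a \<in> \<real>" and nonneg: "0 \<le> Re (A a a)"
    using psd_on_diag[OF insert.prems fin] by auto
  have herm: "\<And>x y. x \<in> insert a F \<Longrightarrow> y \<in> insert a F \<Longrightarrow> A y x = cnj (A x y)"
    using psd_on_hermitian[OF insert.prems fin] by blast
  show ?case
  proof (cases "A a a = 0")
    case True
    have row: "\<And>x. x \<in> insert a F \<Longrightarrow> A a x = 0"
      using psd_on_row_zero[OF insert.prems fin _ True] by blast
    then have col: "\<And>x. x \<in> insert a F \<Longrightarrow> A x a = 0"
      using herm by (metis complex_cnj_zero insertI1)
    have "psd_on A F" by (rule psd_on_subset[OF insert.prems fin]) auto
    then obtain v where "gram_factor A F v" using insert.IH by blast
    then show ?thesis using gram_factor_insert_null[of F a A v] insert.hyps row col by blast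
  next
    case False
    have p: "A a a = of_real (Re (A a a))" "Re (A a a) > 0"
      using real nonneg False by (auto simp: complex_eq_iff complex_is_Real_iff)
    have "psd_on (\<lambda>x y. A x y - A x a * A a y / A a a) F"
      by (rule psd_on_schur_complement) (use insert False in auto)
    then obtain w where "gram_factor (\<lambda>x y. A x y - A x a * A a y / A a a) F w"
      using insert.IH by blast
    then show ?thesis
      using gram_factor_insert_pivot[of F a A "Re (A a a)" w] insert.hyps p herm by blast
  qed
qed

lemma psd_on_mult:
  assumes fin: "finite F" and A: "psd_on A F" and B: "psd_on B F"
  shows "psd_on (\<lambda>x y. A x y * B x y) F"
  unfolding psd_on_def
proof
  fix c
  obtain v where v: "gram_factor A F v" using psd_on_imp_gram_factor[OF fin A] by blast
  let ?c = "\<lambda>k x. c x * cnj (v k x)"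
  have "quad_form (\<lambda>x y. A x y * B x y) F c
          = (\<Sum>x\<in>F. \<Sum>y\<in>F. \<Sum>k\<in>F. cnj (?c k x) * ?c k y * B x y)"
    unfolding quad_form_def
  proof (intro sum.cong refl)
    fix x y assume "x \<in> F" "y \<in> F"
    then have "A x y = (\<Sum>k\<in>F. v k x * cnj (v k y))" using v unfolding gram_factor_def by blast
    then show "cnj (c x) * c y * (A x y * B x y) = (\<Sum>k\<in>F. cnj (?c k x) * ?c k y * B x y)"
      by (simp add: sum_distrib_left sum_distrib_right mult_ac)
  qed
  also have "\<dots> = (\<Sum>k\<in>F. quad_form B F (?c k))"
    unfolding quad_form_def by (subst sum.swap, rule sum.cong[OF refl], rule sum.swap)
  finally have eq: "quad_form (\<lambda>x y. A x y * B x y) F c = (\<Sum>k\<in>F. quad_form B F (?c k))" .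
  have "(\<Sum>k\<in>F. quad_form B F (?c k)) \<in> \<real>"
    using psd_onD(1)[OF B] by (intro sum_in_Reals)
  moreover have "0 \<le> Re (\<Sum>k\<in>F. quad_form B F (?c k))"
    using psd_onD(2)[OF B] unfolding Re_sum by (intro sum_nonneg)
  ultimately show "quad_form (\<lambda>x y. A x y * B x y) F c \<in> \<real> \<and>
                   0 \<le> Re (quad_form (\<lambda>x y. A x y * B x y) F c)"
    unfolding eq by simp
qed

lemma psd_on_minus_point_mass:
  assumes "finite F" "w \<in> F" "psd_on A F"
    and bound: "\<And>a. a w = 1 \<Longrightarrow> r \<le> Re (quad_form A F a)"
  shows "psd_on (\<lambda>x y. A x y - of_real r * (if x = w \<and> y = w then 1 else 0)) F"
  unfolding psd_on_def
proof
  fix c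
  define N where "N = (Re (c w))\<^sup>2 + (Im (c w))\<^sup>2"
  have N: "cnj (c w) * c w = of_real N"
    unfolding N_def using complex_mult_cnj[of "c w"] by (simp add: mult.commute)
  have eq: "quad_form (\<lambda>x y. A x y - of_real r * (if x = w \<and> y = w then 1 else 0)) F c
              = quad_form A F c - of_real (r * N)"
    unfolding quad_form_minus_point_mass[OF assms(1,2)] N by simp
  have psd: "quad_form A F a \<in> \<real>" "0 \<le> Re (quad_form A F a)" for a
    by (rule psd_onD[OF assms(3)])+
  have "r * N \<le> Re (quad_form A F c)"
  proof (cases "c w = 0")
    case True
    then show ?thesis using psd N_def by simp
  next
    case False
    have "quad_form A F c = cnj (c w) * c w * quad_form A F (\<lambda>x. c x / c w)"
      using quad_form_scale[of A F "c w" "\<lambda>x. c x / c w"] False by simp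
    then have "Re (quad_form A F c) = N * Re (quad_form A F (\<lambda>x. c x / c w))"
      unfolding N by simp
    moreover have "r \<le> Re (quad_form A F (\<lambda>x. c x / c w))" using bound False by simp
    moreover have "0 \<le> N" unfolding N_def by simp
    ultimately show ?thesis by (metis mult.commute mult_right_mono)
  qed
  then show "quad_form (\<lambda>x y. A x y - of_real r * (if x = w \<and> y = w then 1 else 0)) F c \<in> \<real> \<and>
             0 \<le> Re (quad_form (\<lambda>x y. A x y - of_real r * (if x = w \<and> y = w then 1 else 0)) F c)"
    unfolding eq using psd by simp
qed

lemma quad_form_ge_of_psd_on_minus_point_mass:
  assumes "finite F" "w \<in> F" "a w = 1"
    and "psd_on (\<lambda>x y. A x y - of_real r * (if x = w \<and> y = w then 1 else 0)) F"
  shows "r \<le> Re (quad_form A F a)"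
proof -
  have "0 \<le> Re (quad_form (\<lambda>x y. A x y - of_real r * (if x = w \<and> y = w then 1 else 0)) F a)"
    by (rule psd_onD(2)[OF assms(4)])
  also have "quad_form (\<lambda>x y. A x y - of_real r * (if x = w \<and> y = w then 1 else 0)) F a
               = quad_form A F a - of_real r"
    unfolding quad_form_minus_point_mass[OF assms(1,2)] assms(3) by simp
  finally show ?thesis by simp
qed

lemma psd_kernel_imp_psd_on:
  assumes "psd_kernel k" "finite F"
  shows "psd_on k F"
  unfolding psd_on_def
proof
  fix c
  obtain f where f: "bij_betw f {..<card F} F"
    using ex_bij_betw_nat_finite[OF assms(2)] by (auto simp: lessThan_atLeast0)
  have "quad_form k F c = (\<Sum>i<card F. \<Sum>j<card F. cnj (c (f i)) * c (f j) * k (f i) (f j))"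
    unfolding quad_form_def
    by (subst sum.reindex_bij_betw[OF f, symmetric], rule sum.cong[OF refl],
        subst sum.reindex_bij_betw[OF f, symmetric], rule refl)
  moreover have "(\<Sum>i<card F. \<Sum>j<card F. cnj (c (f i)) * c (f j) * k (f i) (f j)) \<in> \<real> \<and>
    0 \<le> Re (\<Sum>i<card F. \<Sum>j<card F. cnj (c (f i)) * c (f j) * k (f i) (f j))"
    using assms(1)[unfolded psd_kernel_def, rule_format, where m = "card F" and x = f and c = "\<lambda>i. c (f i)"] .
  ultimately show "quad_form k F c \<in> \<real> \<and> 0 \<le> Re (quad_form k F c)" by simp
qed

lemma psd_kernel_diag:
  assumes "psd_kernel k"
  shows "of_real (Re (k x x)) = k x x" "0 \<le> Re (k x x)"
  using psd_on_diag[OF psd_kernel_imp_psd_on[OF assms, of "{x}"]]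
  by (auto simp: complex_eq_iff complex_is_Real_iff)

lemma psd_on_rescale:
  assumes "psd_on k F"
  shows "psd_on (\<lambda>x y. k x y / (of_real (s x) * of_real (s y))) F"
proof (rule psd_on_transfer[OF assms])
  show "quad_form (\<lambda>x y. k x y / (of_real (s x) * of_real (s y))) F c
        = quad_form k F (\<lambda>x. c x / of_real (s x))" for c
    unfolding quad_form_def by (intro sum.cong refl) (simp add: complex_cnj_divide divide_inverse)
qed

lemma psd_on_normalized_kernel:
  assumes "psd_kernel k" "finite F"
  shows "psd_on (normalized_kernel k) F"
  unfolding normalized_kernel_def[abs_def]
  by (rule psd_on_rescale[OF psd_kernel_imp_psd_on[OF assms]])

lemma normalized_kernel_mult:
  assumes "psd_kernel g" "psd_kernel h"
  shows "normalized_kernel (\<lambda>x y. g x y * h x y) x y = normalized_kernel g x y * normalized_kernel h x y"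
proof -
  have "kernel_fn_norm (\<lambda>x y. g x y * h x y) z = kernel_fn_norm g z * kernel_fn_norm h z" for z
  proof -
    have "g z z * h z z = of_real (Re (g z z) * Re (h z z))"
      using psd_kernel_diag(1)[OF assms(1)] psd_kernel_diag(1)[OF assms(2)] by (metis of_real_mult)
    then show ?thesis unfolding kernel_fn_norm_def by (simp add: real_sqrt_mult)
  qed
  then show ?thesis
    unfolding normalized_kernel_def by (simp add: divide_inverse inverse_mult_distrib mult_ac)
qed

lemma normalized_kernel_diag:
  assumes "psd_kernel k" "k w w \<noteq> 0"
  shows "normalized_kernel k w w = 1"
proof -
  have pos: "Re (k w w) > 0"
    using psd_kernel_diag[OF assms(1), of w] assms(2) by (metis less_eq_real_def of_real_0)
  have "of_real (kernel_fn_norm k w) * of_real (kernel_fn_norm k w) = k w w"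
    unfolding kernel_fn_norm_def of_real_mult[symmetric] using pos psd_kernel_diag(1)[OF assms(1)]
    by simp
  then show ?thesis unfolding normalized_kernel_def using assms(2) by simp
qed

subsection \<open>Distance to the span of kernel functions\<close>

lemma dist_to_span_quad_form:
  "dist_to_span k w S = (INF c. sqrt (Re (quad_form (normalized_kernel k) (insert w S)
                                            (\<lambda>x. if x = w then 1 else - c x))))"
  unfolding dist_to_span_def comb_norm2_def quad_form_def ..

lemma dist_to_span_sq_le:
  assumes "psd_kernel k" "finite S" "a w = 1"
  shows "(dist_to_span k w S)\<^sup>2 \<le> Re (quad_form (normalized_kernel k) (insert w S) a)"
proof -
  let ?Q = "\<lambda>a. Re (quad_form (normalized_kernel k) (insert w S) a)"
  have nonneg: "0 \<le> ?Q a" for a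
    using psd_onD(2)[OF psd_on_normalized_kernel[OF assms(1) finite.insertI[OF assms(2)]]] by simp
  have bdd: "bdd_below (range (\<lambda>c. sqrt (?Q (\<lambda>x. if x = w then 1 else - c x))))"
    using nonneg by (intro bdd_belowI2[where m = 0]) simp
  have "dist_to_span k w S \<le> sqrt (?Q (\<lambda>x. if x = w then 1 else - (- a x)))"
    unfolding dist_to_span_quad_form by (rule cINF_lower[OF bdd UNIV_I])
  also have "(\<lambda>x. if x = w then 1 else - (- a x)) = a" using assms(3) by auto
  finally have le: "dist_to_span k w S \<le> sqrt (?Q a)" .
  have "0 \<le> dist_to_span k w S"
    unfolding dist_to_span_quad_form by (rule cINF_greatest) (auto simp: nonneg)
  then show ?thesis using power_mono[OF le, of 2] real_sqrt_pow2[OF nonneg] by simp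
qed

lemma le_dist_to_span:
  assumes "\<And>a. a w = 1 \<Longrightarrow> r\<^sup>2 \<le> Re (quad_form (normalized_kernel k) (insert w S) a)"
  shows "r \<le> dist_to_span k w S"
  unfolding dist_to_span_quad_form
proof (rule cINF_greatest)
  fix c
  have "r\<^sup>2 \<le> Re (quad_form (normalized_kernel k) (insert w S) (\<lambda>x. if x = w then 1 else - c x))"
    by (rule assms) simp
  then show "r \<le> sqrt (Re (quad_form (normalized_kernel k) (insert w S) (\<lambda>x. if x = w then 1 else - c x)))"
    by (rule real_le_rsqrt)
qed simp

lemma dist_to_span_le_kernel_mult:
  assumes g: "psd_kernel g" and h: "psd_kernel h" and "h w w \<noteq> 0" and "finite S"
  shows "dist_to_span g w S \<le> dist_to_span (\<lambda>x y. g x y * h x y) w S"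
proof -
  define d where "d = dist_to_span g w S"
  let ?e = "\<lambda>x y. if x = w \<and> y = w then 1 else 0 :: complex"
  have fin: "finite (insert w S)" "w \<in> insert w S" using assms(4) by simp_all
  have psd_g: "psd_on (\<lambda>x y. normalized_kernel g x y - of_real (d\<^sup>2) * ?e x y) (insert w S)"
  proof (rule psd_on_minus_point_mass[OF fin psd_on_normalized_kernel[OF g fin(1)]])
    fix a :: "'a \<Rightarrow> complex"
    assume "a w = 1"
    then show "d\<^sup>2 \<le> Re (quad_form (normalized_kernel g) (insert w S) a)"
      unfolding d_def by (rule dist_to_span_sq_le[OF g assms(4)])
  qed
  have "normalized_kernel h w w = 1" by (rule normalized_kernel_diag[OF h assms(3)])
  then have eq: "(\<lambda>x y. (normalized_kernel g x y - of_real (d\<^sup>2) * ?e x y) * normalized_kernel h x y)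
      = (\<lambda>x y. normalized_kernel (\<lambda>x y. g x y * h x y) x y - of_real (d\<^sup>2) * ?e x y)"
    unfolding normalized_kernel_mult[OF g h] by (intro ext) (simp add: left_diff_distrib)
  have psd_gh: "psd_on (\<lambda>x y. normalized_kernel (\<lambda>x y. g x y * h x y) x y - of_real (d\<^sup>2) * ?e x y)
                  (insert w S)"
    using psd_on_mult[OF fin(1) psd_g psd_on_normalized_kernel[OF h fin(1)]] unfolding eq .
  show ?thesis
    unfolding d_def[symmetric]
  proof (rule le_dist_to_span)
    fix a :: "'a \<Rightarrow> complex"
    assume "a w = 1"
    then show "d\<^sup>2 \<le> Re (quad_form (normalized_kernel (\<lambda>x y. g x y * h x y)) (insert w S) a)"
      by (rule quad_form_ge_of_psd_on_minus_point_mass[OF fin _ psd_gh])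
  qed
qed

theorem lemma4p8:
  fixes g l :: "'a \<Rightarrow> 'a \<Rightarrow> complex"
    and n :: nat and \<mu> :: "nat \<Rightarrow> 'a"
  assumes "psd_kernel g" and "psd_kernel l"
    and "\<forall>z. g z z \<noteq> 0" and "\<forall>z. l z z \<noteq> 0"
    and "\<exists>h. psd_kernel h \<and> (\<forall>x y. l x y = g x y * h x y)"
    and "n \<ge> 2" and "inj_on \<mu> {1..n}"
  shows "dist_to_span g (\<mu> 1) (\<mu> ` {2..n}) \<le> dist_to_span l (\<mu> 1) (\<mu> ` {2..n})"
proof -
  obtain h where h: "psd_kernel h" and hl: "\<And>x y. l x y = g x y * h x y"
    using assms(5) by blast
  have l: "l = (\<lambda>x y. g x y * h x y)" by (rule ext, rule ext, rule hl)
  have "h (\<mu> 1) (\<mu> 1) \<noteq> 0" using assms(4) hl by (metis mult_zero_right)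
  then show ?thesis unfolding l by (rule dist_to_span_le_kernel_mult[OF assms(1) h]) simp
qed

end
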